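(* Let $d\ge2$ and let $\mathcal{G},\mathcal{H}\subseteq\binom{\mathbb{N}}{d}$ be finite families with $|\mathcal{G}|=|\mathcal{H}|$. If $\mathcal{G}$ is compressed and $\mathcal{H}$ is both left-compressed and right-compressed, then $|\mathrm{Inc}(\mathcal{G})|\le|\mathrm{Inc}(\mathcal{H})|$.
   Context: $\mathbb{N}=\{1,2,3,\dots\}$, $\mathbb{N}_{>k}=\{k+1,k+2,\dots\}$. $\binom{S}{d}$ is the set of $d$-element subsets of $S$; elements are written $\mathbf{u}=(u_1,\ldots,u_d)$ with $u_1<\cdots<u_d$. Squashed order: $\mathbf{u}<\mathbf{v}$ iff the largest element of the symmetric difference of $\mathbf{u},\mathbf{v}$ belongs to $\mathbf{v}$. A finite family in $\binom{\mathbb{N}}{e}$ (resp. $\binom{\mathbb{N}_{>k}}{e}$) is compressed (in it) if it consists of the smallest elements of $\binom{\mathbb{N}}{e}$ (resp. $\binom{\mathbb{N}_{>k}}{e}$) in the squashed order. For $\mathcal{F}\subseteq\binom{\mathbb{N}}{d}$ and $k\ge1$: $\widehat{\mathcal{F}}_{1,k}=\{\widehat{\mathbf{u}}\in\binom{\mathbb{N}_{>k}}{d-1}\mid \{k\}\cup\widehat{\mathbf{u}}\in\mathcal{F}\}$ and $\widehat{\mathcal{F}}_{d,k}=\{\widehat{\mathbf{u}}\in\binom{\mathbb{N}}{d-1}\mid \max\widehat{\mathbf u}<k,\ \widehat{\mathbf{u}}\cup\{k\}\in\mathcal{F}\}$. $\mathcal{F}$ is left-compressed if every $\widehat{\mathcal{F}}_{1,k}$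 is compressed in $\binom{\mathbb{N}_{>k}}{d-1}$, and right-compressed if every $\widehat{\mathcal{F}}_{d,k}$ is compressed in $\binom{\mathbb{N}}{d-1}$. $\mathrm{Inc}_1$ is the set of maps $\pi\colon\mathbb{N}\to\mathbb{N}$ with $\pi(j)<\pi(j+1)$ and $\pi(j)\le j+1$ for all $j$, acting by $\pi(\mathbf{u})=(\pi(u_1),\ldots,\pi(u_d))$; $\mathrm{Inc}(\mathcal{F})=\{\pi(\mathbf{u})\mid\mathbf{u}\in\mathcal{F},\pi\in\mathrm{Inc}_1\}$. *)

theory Defs
  imports Main
begin

text \<open>N_{>k} = {k+1, k+2, ...}; the positive naturals are N_{>0}.\<close>

definition subsets_gt :: "nat \<Rightarrow> nat \<Rightarrow> nat set set" where
  "subsets_gt k e = {u. finite u \<and> card u = e \<and> (\<forall>x\<in>u. k < x)}"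

abbreviation subsets_N :: "nat \<Rightarrow> nat set set" where
  "subsets_N e \<equiv> subsets_gt 0 e"

definition squashed_less :: "nat set \<Rightarrow> nat set \<Rightarrow> bool" where
  "squashed_less u v \<longleftrightarrow> u \<noteq> v \<and> Max ((u - v) \<union> (v - u)) \<in> v"

definition compressed_in :: "nat \<Rightarrow> nat \<Rightarrow> nat set set \<Rightarrow> bool" where
  "compressed_in k e F \<longleftrightarrow> finite F \<and> F \<subseteq> subsets_gt k e \<and>
     (\<forall>u\<in>F. \<forall>v\<in>subsets_gt k e. squashed_less v u \<longrightarrow> v \<in> F)"

definition hatF1 :: "nat set set \<Rightarrow> nat \<Rightarrow> nat \<Rightarrow> nat set set" where
  "hatF1 F d k = {w \<in> subsets_gt k (d - 1). insert k w \<in> F}"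

definition hatFd :: "nat set set \<Rightarrow> nat \<Rightarrow> nat \<Rightarrow> nat set set" where
  "hatFd F d k = {w \<in> subsets_N (d - 1). (\<forall>x\<in>w. x < k) \<and> insert k w \<in> F}"

definition left_compressed :: "nat \<Rightarrow> nat set set \<Rightarrow> bool" where
  "left_compressed d F \<longleftrightarrow> (\<forall>k\<ge>1. compressed_in k (d - 1) (hatF1 F d k))"

definition right_compressed :: "nat \<Rightarrow> nat set set \<Rightarrow> bool" where
  "right_compressed d F \<longleftrightarrow> (\<forall>k\<ge>1. compressed_in 0 (d - 1) (hatFd F d k))"

text \<open>Inc_1: maps N \<rightarrow> N (value at 0 is irrelevant), strictly increasing, with pi(j) \<le> j+1.\<close>
definition Inc1 :: "(nat \<Rightarrow> nat) set" where
  "Inc1 = {\<pi>. \<forall>j\<ge>1. 1 \<le> \<pi> j \<and> \<pi> j < \<pi> (j + 1) \<and> \<pi> j \<le> j + 1}"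

definition IncF :: "nat set set \<Rightarrow> nat set set" where
  "IncF F = {\<pi> ` u | u \<pi>. u \<in> F \<and> \<pi> \<in> Inc1}"

end

theory Submission
  imports Defs
begin

text \<open>Both a compressed family and a left- and right-compressed family are shifted: closed
  under replacing an element \<open>x\<close> by an absent \<open>y < x\<close>. For a shifted family \<open>H\<close>, a set
  \<open>\<pi>(u)\<close> avoiding 1 is the translate by one of a shift of \<open>u\<close>, hence of a member of \<open>H\<close>, while
  the sets \<open>\<pi>(u)\<close> containing 1 come from the link of 1 in \<open>H\<close>. This gives
  \<open>|Inc(H)| = |H| + |Inc(link H)|\<close>, so by induction on \<open>d\<close> it suffices that among shifted families
  of a given size the compressed one has the smallest link of 1. That is proved together with
  the Kruskal--Katona type statement that compressed families have the smallest shadow among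
  shifted ones, by induction on \<open>d\<close> and the size of the family.\<close>

section \<open>The colex order\<close>

definition colex_rank :: "nat set \<Rightarrow> nat" where
  "colex_rank u = (\<Sum>x\<in>u. 2 ^ x)"

definition colex_less :: "nat set \<Rightarrow> nat set \<Rightarrow> bool" where
  "colex_less u v \<longleftrightarrow> (\<exists>s\<in>v. s \<notin> u \<and> (\<forall>t>s. t \<in> u \<longleftrightarrow> t \<in> v))"

lemma colex_rank_less_power:
  assumes "A \<subseteq> {..<s}"
  shows "colex_rank A < 2 ^ s"
proof -
  have "colex_rank A \<le> (\<Sum>i<s. 2 ^ i)"
    unfolding colex_rank_def by (rule sum_mono2) (use assms in auto)
  also have "\<dots> = 2 ^ s - 1"
    using mask_eq_sum_exp_nat[of s] by (simp add: lessThan_def)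
  also have "\<dots> < 2 ^ s" by simp
  finally show ?thesis .
qed

lemma colex_less_imp_rank_less:
  assumes "finite u" "finite v" "colex_less u v"
  shows "colex_rank u < colex_rank v"
proof -
  obtain s where s: "s \<in> v" "s \<notin> u" "\<forall>t>s. t \<in> u \<longleftrightarrow> t \<in> v"
    using assms(3) by (auto simp: colex_less_def)
  define T where "T = v \<inter> {s<..}"
  have u_split: "u = (u \<inter> {..<s}) \<union> T"
    using s by (auto simp: T_def) (metis linorder_neqE_nat)+
  have v_split: "v = (v \<inter> {..<s}) \<union> insert s T"
    using s by (auto simp: T_def)
  have "finite T" using assms(2) by (simp add: T_def)
  have "colex_rank u = colex_rank (u \<inter> {..<s}) + colex_rank T"
    unfolding colex_rank_def
    by (subst u_split, rule sum.union_disjoint) (use assms \<open>finite T\<close> in \<open>auto simp: T_def\<close>)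
  also have "\<dots> < 2 ^ s + colex_rank T"
    using colex_rank_less_power[of "u \<inter> {..<s}" s] by simp
  also have "\<dots> = colex_rank (insert s T)"
    using \<open>finite T\<close> by (simp add: colex_rank_def T_def)
  also have "\<dots> \<le> colex_rank (v \<inter> {..<s}) + colex_rank (insert s T)" by simp
  also have "\<dots> = colex_rank ((v \<inter> {..<s}) \<union> insert s T)"
    unfolding colex_rank_def
    by (rule sum.union_disjoint[symmetric]) (use assms \<open>finite T\<close> in \<open>auto simp: T_def\<close>)
  also have "\<dots> = colex_rank v"
    using v_split by simp
  finally show ?thesis .
qed

lemma squashed_less_iff_colex_less:
  assumes "finite u" "finite v"
  shows "squashed_less u v \<longleftrightarrow> colex_less u v"
proof
  let ?D = "(u - v) \<union> (v - u)"
  assume "squashed_less u v"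
  then have "u \<noteq> v" and top: "Max ?D \<in> v"
    by (auto simp: squashed_less_def)
  then have fin: "finite ?D" "?D \<noteq> {}"
    using assms by auto
  have "t \<in> u \<longleftrightarrow> t \<in> v" if "Max ?D < t" for t
    using that Max_ge[OF fin(1), of t] by auto
  moreover have "Max ?D \<notin> u"
    using Max_in[OF fin] top by blast
  ultimately show "colex_less u v"
    using top unfolding colex_less_def by blast
next
  assume "colex_less u v"
  then obtain s where s: "s \<in> v" "s \<notin> u" "\<forall>t>s. t \<in> u \<longleftrightarrow> t \<in> v"
    by (auto simp: colex_less_def)
  have "Max ((u - v) \<union> (v - u)) = s"
    by (rule Max_eqI) (use assms s in \<open>auto intro: leI\<close>)
  then show "squashed_less u v"
    using s unfolding squashed_less_def by auto
qed

lemma colex_less_total: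
  assumes "finite u" "finite v" "u \<noteq> v"
  shows "colex_less u v \<or> colex_less v u"
proof -
  have "Max ((u - v) \<union> (v - u)) \<in> (u - v) \<union> (v - u)"
    using assms by (intro Max_in) auto
  then have "squashed_less u v \<or> squashed_less v u"
    using assms(3) unfolding squashed_less_def by (auto simp: Un_commute)
  then show ?thesis
    using squashed_less_iff_colex_less assms(1,2) by blast
qed

lemma colex_rank_less_iff:
  assumes "finite u" "finite v"
  shows "colex_rank u < colex_rank v \<longleftrightarrow> colex_less u v"
  using colex_less_imp_rank_less[OF assms] colex_less_imp_rank_less[OF assms(2,1)]
    colex_less_total[OF assms] by fastforce

lemma colex_rank_eq_iff:
  assumes "finite u" "finite v"
  shows "colex_rank u = colex_rank v \<longleftrightarrow> u = v"
  using colex_less_imp_rank_less[OF assms] colex_less_imp_rank_less[OF assms(2,1)]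
    colex_less_total[OF assms] by fastforce

lemma mem_subsets_N_iff: "u \<in> subsets_N e \<longleftrightarrow> finite u \<and> card u = e \<and> 0 \<notin> u"
  unfolding subsets_gt_def by auto (metis neq0_conv)

lemma subsets_N_0: "subsets_N 0 = {{}}"
  unfolding subsets_gt_def by auto

lemma one_le_of_zero_notin: "0 \<notin> u \<Longrightarrow> x \<in> u \<Longrightarrow> 1 \<le> (x :: nat)"
  by (cases x) auto

lemma compressed_in_0_iff:
  "compressed_in 0 e C \<longleftrightarrow> finite C \<and> C \<subseteq> subsets_N e \<and>
     (\<forall>u\<in>C. \<forall>v\<in>subsets_N e. colex_rank v < colex_rank u \<longrightarrow> v \<in> C)"
proof -
  have "squashed_less v u \<longleftrightarrow> colex_rank v < colex_rank u"
    if "u \<in> subsets_N e" "v \<in> subsets_N e" for u v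
    using that squashed_less_iff_colex_less colex_rank_less_iff by (simp add: mem_subsets_N_iff)
  then show ?thesis
    unfolding compressed_in_def by blast
qed

lemma compressed_subset_of_card_le:
  assumes C: "compressed_in 0 e C" and C': "compressed_in 0 e C'" and le: "card C \<le> card C'"
  shows "C \<subseteq> C'"
proof (rule ccontr)
  assume "\<not> C \<subseteq> C'"
  then obtain x where x: "x \<in> C" "x \<notin> C'" by blast
  have fC: "finite C" "C \<subseteq> subsets_N e"
    and down: "\<forall>u\<in>C. \<forall>v\<in>subsets_N e. colex_rank v < colex_rank u \<longrightarrow> v \<in> C"
    using C by (simp_all add: compressed_in_0_iff)
  have fC': "C' \<subseteq> subsets_N e"
    and down': "\<forall>u\<in>C'. \<forall>v\<in>subsets_N e. colex_rank v < colex_rank u \<longrightarrow> v \<in> C'"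
    using C' by (simp_all add: compressed_in_0_iff)
  have "C' \<subseteq> C - {x}"
  proof
    fix y assume y: "y \<in> C'"
    have "y \<noteq> x" using x y by auto
    moreover have "finite x" "finite y"
      using x y fC fC' by (auto simp: mem_subsets_N_iff)
    ultimately have "colex_rank y \<noteq> colex_rank x"
      using colex_rank_eq_iff by blast
    moreover have "\<not> colex_rank x < colex_rank y"
      using down' x y fC by blast
    ultimately have "colex_rank y < colex_rank x" by linarith
    then show "y \<in> C - {x}"
      using down x y fC' \<open>y \<noteq> x\<close> by blast
  qed
  then have "card C' \<le> card (C - {x})" using fC by (intro card_mono) auto
  also have "\<dots> < card C" using fC(1) x(1) by (rule card_Diff1_less)
  finally show False using le by simp
qed

lemma compressed_exists:
  assumes "finite F" "F \<subseteq> subsets_N e" "n \<le> card F"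
  shows "\<exists>C. compressed_in 0 e C \<and> card C = n"
  using assms(3)
proof (induction n)
  case 0
  show ?case by (rule exI[of _ "{}"]) (simp add: compressed_in_def)
next
  case (Suc n)
  then obtain C where C: "compressed_in 0 e C" "card C = n" by auto
  then have fC: "finite C" "C \<subseteq> subsets_N e"
    and down: "\<forall>u\<in>C. \<forall>v\<in>subsets_N e. colex_rank v < colex_rank u \<longrightarrow> v \<in> C"
    by (simp_all add: compressed_in_0_iff)
  have "\<not> F \<subseteq> C"
  proof
    assume "F \<subseteq> C"
    then have "card F \<le> card C" using fC(1) by (rule card_mono[rotated])
    then show False using Suc.prems C(2) by linarith
  qed
  then obtain y0 where "y0 \<in> subsets_N e - C" using assms(2) by blast
  then obtain y where y: "y \<in> subsets_N e - C"
    and y_least: "\<And>z. z \<in> subsets_N e - C \<Longrightarrow> colex_rank y \<le> colex_rank z"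
    using ex_has_least_nat[of "\<lambda>z. z \<in> subsets_N e - C" y0 colex_rank] by blast
  have "compressed_in 0 e (insert y C)"
    unfolding compressed_in_0_iff
  proof (intro conjI ballI impI)
    show "finite (insert y C)" "insert y C \<subseteq> subsets_N e" using fC y by auto
  next
    fix u v assume u: "u \<in> insert y C" and v: "v \<in> subsets_N e"
      and less: "colex_rank v < colex_rank u"
    show "v \<in> insert y C"
    proof (cases "u = y")
      case True
      then show ?thesis using y_least[of v] v less by fastforce
    next
      case False
      then show ?thesis using u v less down by blast
    qed
  qed
  moreover have "card (insert y C) = Suc n" using y fC C(2) by simp
  ultimately show ?case by blast
qed

section \<open>The shifting order\<close>

definition count_below :: "nat set \<Rightarrow> nat \<Rightarrow> nat" where
  "count_below u t = card (u \<inter> {..<t})"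

text \<open>For sets of equal size, \<open>shift_le v u\<close> says \<open>v\<^sub>i \<le> u\<^sub>i\<close> for the increasing
  enumerations of \<open>v\<close> and \<open>u\<close>: \<open>v\<close> arises from \<open>u\<close> by moving elements down.\<close>
definition shift_le :: "nat set \<Rightarrow> nat set \<Rightarrow> bool" where
  "shift_le v u \<longleftrightarrow> (\<forall>t. count_below u t \<le> count_below v t)"

definition shifted :: "nat \<Rightarrow> nat set set \<Rightarrow> bool" where
  "shifted e H \<longleftrightarrow> H \<subseteq> subsets_N e \<and> (\<forall>u\<in>H. \<forall>v\<in>subsets_N e. shift_le v u \<longrightarrow> v \<in> H)"

lemma count_below_0 [simp]: "count_below u 0 = 0"
  by (simp add: count_below_def)

lemma count_below_Suc:
  assumes "finite u"
  shows "count_below u (Suc t) = count_below u t + (if t \<in> u then 1 else 0)"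
proof -
  have "u \<inter> {..<Suc t} = (if t \<in> u then insert t (u \<inter> {..<t}) else u \<inter> {..<t})"
    by (auto simp: less_Suc_eq)
  then show ?thesis using assms by (simp add: count_below_def)
qed

lemma count_below_le_card: "finite u \<Longrightarrow> count_below u t \<le> card u"
  unfolding count_below_def by (simp add: card_mono)

lemma count_below_mono: "finite u \<Longrightarrow> t \<le> t' \<Longrightarrow> count_below u t \<le> count_below u t'"
  unfolding count_below_def by (intro card_mono) auto

lemma card_eq_count_below_add:
  assumes "finite u"
  shows "card u = count_below u s + card (u \<inter> {s..})"
proof -
  have "u = (u \<inter> {..<s}) \<union> (u \<inter> {s..})" by auto
  then have "card u = card ((u \<inter> {..<s}) \<union> (u \<inter> {s..}))" by simp
  also have "\<dots> = card (u \<inter> {..<s}) + card (u \<inter> {s..})"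
    by (rule card_Un_disjoint) (use assms in auto)
  finally show ?thesis by (simp add: count_below_def)
qed

lemma count_below_inject:
  assumes "finite u" "finite v" "\<And>t. count_below u t = count_below v t"
  shows "u = v"
proof -
  have "t \<in> u \<longleftrightarrow> t \<in> v" for t
    using assms(3)[of "Suc t"] assms(3)[of t] count_below_Suc[OF assms(1), of t]
      count_below_Suc[OF assms(2), of t]
    by (auto split: if_splits)
  then show ?thesis by blast
qed

lemma card_insert_Diff_swap:
  assumes "finite w" "x \<in> w" "y \<notin> w"
  shows "card (insert y (w - {x})) = card w"
proof -
  have "card (insert y (w - {x})) = Suc (card (w - {x}))"
    using assms by simp
  also have "\<dots> = card w"
    using assms(1,2) by (rule card_Suc_Diff1)
  finally show ?thesis .
qed

lemma sum_shift_down_less: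
  fixes u :: "nat set"
  assumes "finite u" "x \<in> u" "y < x" "y \<notin> u"
  shows "\<Sum>(insert y (u - {x})) < \<Sum>u"
proof -
  have "finite (u - {x})" "y \<notin> u - {x}" using assms(1,4) by blast+
  then have "\<Sum>(insert y (u - {x})) = y + \<Sum>(u - {x})"
    by (rule sum.insert)
  also have "\<dots> < x + \<Sum>(u - {x})" using assms(3) by simp
  also have "\<dots> = \<Sum>u" using sum.remove[OF assms(1,2), of "\<lambda>y. y"] by simp
  finally show ?thesis .
qed

lemma count_below_shift_down:
  assumes u: "finite u" "x \<in> u" "y < x" "y \<notin> u"
  shows "count_below (insert y (u - {x})) t =
    count_below u t + (if y < t \<and> t \<le> x then 1 else 0)"
proof -
  consider "t \<le> y" | "y < t" "t \<le> x" | "x < t" by linarith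
  then show ?thesis
  proof cases
    case 1
    then have "insert y (u - {x}) \<inter> {..<t} = u \<inter> {..<t}"
      using u by auto
    then show ?thesis using 1 by (simp add: count_below_def)
  next
    case 2
    then have "insert y (u - {x}) \<inter> {..<t} = insert y (u \<inter> {..<t})"
      using u by auto
    then show ?thesis using 2 u by (simp add: count_below_def)
  next
    case 3
    then have "insert y (u - {x}) \<inter> {..<t} = insert y ((u \<inter> {..<t}) - {x})"
      using u by auto
    then show ?thesis
      using 3 u card_insert_Diff_swap[of "u \<inter> {..<t}" x y] by (simp add: count_below_def)
  qed
qed

lemma shift_le_shift_down:
  assumes "finite u" "x \<in> u" "y < x" "y \<notin> u"
  shows "shift_le (insert y (u - {x})) u"
  unfolding shift_le_def using count_below_shift_down[OF assms] by simp

lemma shift_le_imp_colex_less: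
  assumes fu: "finite u" and fv: "finite v" and "card u = card v" "shift_le v u" "v \<noteq> u"
  shows "colex_less v u"
proof -
  have "\<not> colex_less u v"
  proof
    assume "colex_less u v"
    then obtain s where s: "s \<in> v" "s \<notin> u" "\<forall>t>s. t \<in> u \<longleftrightarrow> t \<in> v"
      by (auto simp: colex_less_def)
    define T where "T = v \<inter> {s<..}"
    have "u \<inter> {s..} = T" "v \<inter> {s..} = insert s T"
      using s by (auto simp: T_def le_less)
    moreover have "finite T" using fv by (simp add: T_def)
    ultimately have "count_below v s < count_below u s"
      using card_eq_count_below_add[OF fu, of s] card_eq_count_below_add[OF fv, of s] assms(3)
      by (simp add: T_def)
    then show False using assms(4) unfolding shift_le_def by (meson leD)
  qed
  then show ?thesis using colex_less_total[OF fv fu assms(5)] by blast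
qed

lemma compressed_imp_shifted:
  assumes "compressed_in 0 e C"
  shows "shifted e C"
  unfolding shifted_def
proof (intro conjI ballI impI)
  have C: "C \<subseteq> subsets_N e"
    and down: "\<forall>u\<in>C. \<forall>v\<in>subsets_N e. colex_rank v < colex_rank u \<longrightarrow> v \<in> C"
    using assms by (simp_all add: compressed_in_0_iff)
  then show "C \<subseteq> subsets_N e" by simp
  fix u v assume u: "u \<in> C" and v: "v \<in> subsets_N e" and "shift_le v u"
  show "v \<in> C"
  proof (cases "v = u")
    case False
    have "finite u" "finite v" "card u = card v"
      using u v C by (auto simp: mem_subsets_N_iff)
    then have "colex_rank v < colex_rank u"
      using shift_le_imp_colex_less \<open>shift_le v u\<close> False colex_less_imp_rank_less by blast
    then show ?thesis using down u v by blast
  qed (use u in simp)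
qed

text \<open>\<open>p\<close> is the first position where \<open>v\<close> is ahead of \<open>u\<close>, and \<open>x\<close> the next element of \<open>u\<close>.\<close>
lemma shift_le_first_difference:
  assumes fu: "finite u" and fv: "finite v" and card: "card u = card v"
    and le: "shift_le v u" and ne: "v \<noteq> u"
  obtains p x where "p \<in> v" "p \<notin> u" "count_below u p = count_below v p"
    "x \<in> u" "p < x" "u \<inter> {..<x} = u \<inter> {..<p}"
proof -
  have "\<exists>t. count_below u t < count_below v t"
  proof (rule ccontr)
    assume "\<not> ?thesis"
    then have "count_below u t = count_below v t" for t
      using le unfolding shift_le_def by (meson le_neq_implies_less)
    then show False using count_below_inject[OF fu fv] ne by metis
  qed
  then obtain t0 where t0: "count_below u t0 < count_below v t0"
    and least: "\<forall>t<t0. \<not> count_below u t < count_below v t"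
    using exists_least_iff[of "\<lambda>t. count_below u t < count_below v t"] by blast
  obtain p where p_def: "t0 = Suc p" using t0 by (cases t0) auto
  have eq: "count_below u p = count_below v p"
    using least p_def le unfolding shift_le_def by (metis le_neq_implies_less lessI)
  have p: "p \<notin> u" "p \<in> v"
    using t0 eq count_below_Suc[OF fu, of p] count_below_Suc[OF fv, of p] p_def
    by (auto split: if_splits)
  define X where "X = {y \<in> u. p < y}"
  have "X \<noteq> {}"
  proof
    assume "X = {}"
    then have "u \<inter> {..<p} = u" using p(1) by (auto simp: X_def) (metis linorder_neqE_nat)
    then have "count_below u p = card u" by (simp add: count_below_def)
    then show False
      using eq count_below_Suc[OF fv, of p] p(2) count_below_le_card[OF fv, of "Suc p"] card
      by simp
  qed
  moreover have "finite X" using fu by (simp add: X_def)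
  ultimately have x: "Min X \<in> u" "p < Min X" and x_min: "\<And>y. y \<in> u \<Longrightarrow> p < y \<Longrightarrow> Min X \<le> y"
    using Min_in[of X] by (auto simp: X_def)
  have "u \<inter> {..<Min X} = u \<inter> {..<p}"
    using x_min p(1) x(2) by auto (metis le_neq_implies_less not_less)
  then show ?thesis using that p eq x by blast
qed

lemma shift_le_step:
  assumes fu: "finite u" and fv: "finite v" "0 \<notin> v" and card: "card u = card v"
    and le: "shift_le v u" and ne: "v \<noteq> u"
  obtains x where "x \<in> u" "x - 1 \<notin> u" "2 \<le> x" "shift_le v (insert (x - 1) (u - {x}))"
proof -
  obtain p x where p: "p \<in> v" "p \<notin> u" and eq: "count_below u p = count_below v p"
    and x: "x \<in> u" "p < x" and gap: "u \<inter> {..<x} = u \<inter> {..<p}"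
    using shift_le_first_difference[OF fu fv(1) card le ne] .
  have x1: "x - 1 \<notin> u"
  proof
    assume "x - 1 \<in> u"
    then have "x - 1 \<in> u \<inter> {..<x}" using x(2) by auto
    then have "x - 1 < p" using gap by auto
    then show False using x(2) by linarith
  qed
  have "p \<noteq> 0" using p(1) fv(2) by metis
  then have x2: "2 \<le> x" using x(2) by linarith
  have "count_below (insert (x - 1) (u - {x})) t \<le> count_below v t" for t
  proof -
    have "x - 1 < t \<and> t \<le> x \<longleftrightarrow> t = x" using x2 by linarith
    then have new: "count_below (insert (x - 1) (u - {x})) t =
        count_below u t + (if t = x then 1 else 0)"
      using count_below_shift_down[OF fu x(1) _ x1, of t] x2 by simp
    show ?thesis
    proof (cases "t = x")
      case True
      have "count_below v (Suc p) \<le> count_below v x"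
        using count_below_mono[OF fv(1)] x(2) by simp
      moreover have "count_below u x = count_below u p"
        using gap by (simp add: count_below_def)
      ultimately show ?thesis using new True eq count_below_Suc[OF fv(1), of p] p(1) by simp
    next
      case False
      then show ?thesis using new le by (simp add: shift_le_def)
    qed
  qed
  then show ?thesis using that x(1) x1 x2 by (simp add: shift_le_def)
qed

section \<open>Left- and right-compressed families are shifted\<close>

lemma squashed_less_shift_down:
  assumes "finite w" "x \<in> w" "y < x" "y \<notin> w"
  shows "squashed_less (insert y (w - {x})) w"
proof -
  have "colex_less (insert y (w - {x})) w"
    unfolding colex_less_def using assms by (intro bexI[of _ x]) auto
  then show ?thesis using assms(1) squashed_less_iff_colex_less by simp
qed

lemma compressed_in_shift_down:
  assumes F: "compressed_in k e F" and w: "w \<in> F" and "x \<in> w" "y < x" "y \<notin> w" "k < y"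
  shows "insert y (w - {x}) \<in> F"
proof -
  have wS: "w \<in> subsets_gt k e" using F w unfolding compressed_in_def by blast
  then have fw: "finite w" "card w = e" by (simp_all add: subsets_gt_def)
  then have "card (insert y (w - {x})) = e"
    by (simp only: card_insert_Diff_swap[OF fw(1) assms(3,5)])
  with wS have "insert y (w - {x}) \<in> subsets_gt k e"
    using assms(3,4,6) by (auto simp: subsets_gt_def)
  moreover have "squashed_less (insert y (w - {x})) w"
    using wS assms(3-5) by (intro squashed_less_shift_down) (auto simp: subsets_gt_def)
  ultimately show ?thesis using F w unfolding compressed_in_def by blast
qed

lemma left_compressed_shift_down:
  assumes L: "left_compressed d H" and HS: "H \<subseteq> subsets_N d" and u: "u \<in> H"
    and x: "x \<in> u" "x - 1 \<notin> u" "Min u < x"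
  shows "insert (x - 1) (u - {x}) \<in> H"
proof -
  define k where "k = Min u"
  have fu: "finite u" "card u = d" "0 \<notin> u" using u HS by (auto simp: mem_subsets_N_iff)
  moreover have "u \<noteq> {}" using x(1) by auto
  ultimately have k: "k \<in> u" "\<forall>y\<in>u. k \<le> y" by (simp_all add: k_def)
  have "k \<noteq> 0" using k(1) fu(3) by metis
  have "k \<noteq> x - 1" using k(1) x(2) by metis
  then have "k < x - 1" using x(3) k_def by linarith
  have "u - {k} \<in> hatF1 H d k"
    unfolding hatF1_def subsets_gt_def using fu k u by (auto simp: insert_absorb le_less)
  moreover have "compressed_in k (d - 1) (hatF1 H d k)"
    using L \<open>k \<noteq> 0\<close> unfolding left_compressed_def by simp
  ultimately have "insert (x - 1) (u - {k} - {x}) \<in> hatF1 H d k"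
    using x \<open>k < x - 1\<close> by (intro compressed_in_shift_down) auto
  then have "insert k (insert (x - 1) (u - {k} - {x})) \<in> H"
    by (simp add: hatF1_def)
  moreover have "insert k (insert (x - 1) (u - {k} - {x})) = insert (x - 1) (u - {x})"
    using k \<open>k < x - 1\<close> by auto
  ultimately show ?thesis by simp
qed

lemma right_compressed_shift_down:
  assumes R: "right_compressed d H" and HS: "H \<subseteq> subsets_N d" and u: "u \<in> H"
    and x: "x \<in> u" "x - 1 \<notin> u" "2 \<le> x" "x < Max u"
  shows "insert (x - 1) (u - {x}) \<in> H"
proof -
  define n where "n = Max u"
  have fu: "finite u" "card u = d" "0 \<notin> u" using u HS by (auto simp: mem_subsets_N_iff)
  moreover have "u \<noteq> {}" using x(1) by auto
  ultimately have n: "n \<in> u" "\<forall>y\<in>u. y \<le> n" by (simp_all add: n_def)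
  have "u - {n} \<in> hatFd H d n"
    unfolding hatFd_def using fu n u by (auto simp: mem_subsets_N_iff insert_absorb le_less)
  moreover have "compressed_in 0 (d - 1) (hatFd H d n)"
    using R x(4) unfolding right_compressed_def n_def by simp
  ultimately have "insert (x - 1) (u - {n} - {x}) \<in> hatFd H d n"
    using x n_def by (intro compressed_in_shift_down) auto
  then have "insert n (insert (x - 1) (u - {n} - {x})) \<in> H"
    by (simp add: hatFd_def)
  moreover have "insert n (insert (x - 1) (u - {n} - {x})) = insert (x - 1) (u - {x})"
    using n x(4) n_def by auto
  ultimately show ?thesis by simp
qed

lemma left_right_compressed_shift_down:
  assumes d: "2 \<le> d" and L: "left_compressed d H" and R: "right_compressed d H"
    and HS: "H \<subseteq> subsets_N d" and u: "u \<in> H"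
    and x: "x \<in> u" "x - 1 \<notin> u" "2 \<le> x"
  shows "insert (x - 1) (u - {x}) \<in> H"
proof (cases "Min u < x")
  case True
  then show ?thesis using left_compressed_shift_down[OF L HS u x(1,2)] by simp
next
  case False
  have fu: "finite u" "card u = d" using u HS by (auto simp: mem_subsets_N_iff)
  then have "Min u \<le> x" using x(1) by simp
  then have "x = Min u" using False by linarith
  have "x < Max u"
  proof (rule ccontr)
    assume "\<not> x < Max u"
    have "y = x" if "y \<in> u" for y
      using that fu(1) \<open>x = Min u\<close> \<open>\<not> x < Max u\<close> Min_le[of u y] Max_ge[of u y] by linarith
    then have "u \<subseteq> {x}" by blast
    then have "card u \<le> 1" using card_mono[of "{x}" u] by simp
    then show False using fu(2) d by simp
  qed
  then show ?thesis using right_compressed_shift_down[OF R HS u x] by simp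
qed

lemma left_right_compressed_imp_shifted:
  assumes d: "2 \<le> d" and L: "left_compressed d H" and R: "right_compressed d H"
    and HS: "H \<subseteq> subsets_N d"
  shows "shifted d H"
  unfolding shifted_def
proof (intro conjI ballI impI)
  fix u v assume u: "u \<in> H" and v: "v \<in> subsets_N d" and "shift_le v u"
  from u \<open>shift_le v u\<close> show "v \<in> H"
  proof (induction "\<Sum>u" arbitrary: u rule: less_induct)
    case less
    show ?case
    proof (cases "v = u")
      case False
      have fu: "finite u" "card u = d" using less.prems HS by (auto simp: mem_subsets_N_iff)
      have fv: "finite v" "0 \<notin> v" "card v = d" using v by (auto simp: mem_subsets_N_iff)
      have "card u = card v" using fu fv by simp
      then obtain x where x: "x \<in> u" "x - 1 \<notin> u" "2 \<le> x"
        and le: "shift_le v (insert (x - 1) (u - {x}))"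
        using shift_le_step[OF fu(1) fv(1,2) _ less.prems(2) False] by blast
      have "insert (x - 1) (u - {x}) \<in> H"
        using left_right_compressed_shift_down[OF d L R HS less.prems(1) x] .
      moreover have "\<Sum>(insert (x - 1) (u - {x})) < \<Sum>u"
        using sum_shift_down_less[OF fu(1) x(1) _ x(2)] x(3) by simp
      ultimately show ?thesis using less.hyps[OF _ _ le] by blast
    qed (use less.prems in simp)
  qed
qed (use HS in simp)

section \<open>Splitting off the element 1\<close>

text \<open>A family \<open>H\<close> of sets of positive integers is the disjoint union of \<open>cons_one ` link_one H\<close>
  (members containing 1) and \<open>image Suc ` avoid_one H\<close> (members avoiding 1); both parts are
  re-indexed to be families of positive integers again.\<close>
definition cons_one :: "nat set \<Rightarrow> nat set" where
  "cons_one a = insert 1 (Suc ` a)"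

definition link_one :: "nat set set \<Rightarrow> nat set set" where
  "link_one H = {a. 0 \<notin> a \<and> cons_one a \<in> H}"

definition avoid_one :: "nat set set \<Rightarrow> nat set set" where
  "avoid_one H = {b. 0 \<notin> b \<and> Suc ` b \<in> H}"

lemma one_mem_cons_one [simp]: "1 \<in> cons_one a"
  by (simp add: cons_one_def)

lemma cons_one_inject:
  assumes "0 \<notin> a" "0 \<notin> b"
  shows "cons_one a = cons_one b \<longleftrightarrow> a = b"
proof
  assume "cons_one a = cons_one b"
  moreover have "cons_one a - {1} = Suc ` a" "cons_one b - {1} = Suc ` b"
    using assms by (auto simp: cons_one_def)
  ultimately show "a = b" by (simp add: inj_image_eq_iff)
qed simp

lemma inj_on_cons_one: "inj_on cons_one {a. 0 \<notin> a}"
  by (auto intro: inj_onI simp: cons_one_inject)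

lemma inj_image_Suc: "inj (image Suc)"
  by (simp add: inj_on_def inj_image_eq_iff)

lemma cons_one_mem_subsets_N:
  assumes "0 \<notin> a"
  shows "cons_one a \<in> subsets_N e \<longleftrightarrow> finite a \<and> Suc (card a) = e"
proof -
  have "1 \<notin> Suc ` a" using assms by auto
  then have "finite a \<Longrightarrow> card (cons_one a) = Suc (card a)"
    by (simp add: cons_one_def card_image)
  then show ?thesis
    by (auto simp: mem_subsets_N_iff cons_one_def finite_image_iff)
qed

lemma Suc_image_mem_subsets_N: "Suc ` b \<in> subsets_N e \<longleftrightarrow> finite b \<and> card b = e"
  by (auto simp: mem_subsets_N_iff finite_image_iff card_image)

lemma ex_Suc_image:
  assumes "0 \<notin> w" "1 \<notin> w"
  shows "\<exists>b. 0 \<notin> b \<and> w = Suc ` b"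
proof (intro exI conjI)
  show "0 \<notin> (\<lambda>x. x - 1) ` w"
  proof
    assume "0 \<in> (\<lambda>x. x - 1) ` w"
    then obtain x where "x \<in> w" "x - 1 = 0" by auto
    moreover from this(2) have "x = 0 \<or> x = 1" by arith
    ultimately show False using assms by auto
  qed
  have "Suc (x - 1) = x" if "x \<in> w" for x
    using that assms(1) by (cases x) auto
  then show "w = Suc ` (\<lambda>x. x - 1) ` w"
    unfolding image_image by simp
qed

lemma ex_cons_one:
  assumes "0 \<notin> w" "1 \<in> w"
  shows "\<exists>a. 0 \<notin> a \<and> w = cons_one a"
proof -
  obtain a where "0 \<notin> a" "w - {1} = Suc ` a"
    using ex_Suc_image[of "w - {1}"] assms(1) by blast
  then show ?thesis
    using assms(2) by (auto simp: cons_one_def)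
qed

lemma link_one_subset:
  assumes "H \<subseteq> subsets_N e"
  shows "link_one H \<subseteq> subsets_N (e - 1)"
proof
  fix a assume "a \<in> link_one H"
  then have "0 \<notin> a" "cons_one a \<in> subsets_N e" using assms by (auto simp: link_one_def)
  then have "finite a" "Suc (card a) = e" using cons_one_mem_subsets_N by blast+
  then show "a \<in> subsets_N (e - 1)" using \<open>0 \<notin> a\<close> by (auto simp: mem_subsets_N_iff)
qed

lemma avoid_one_subset:
  assumes "H \<subseteq> subsets_N e"
  shows "avoid_one H \<subseteq> subsets_N e"
proof
  fix b assume "b \<in> avoid_one H"
  then have "0 \<notin> b" "Suc ` b \<in> subsets_N e" using assms by (auto simp: avoid_one_def)
  then show "b \<in> subsets_N e" using Suc_image_mem_subsets_N by (simp add: mem_subsets_N_iff)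
qed

lemma image_cons_one_link_one:
  assumes "H \<subseteq> subsets_N e"
  shows "cons_one ` link_one H = {w \<in> H. 1 \<in> w}"
proof
  show "{w \<in> H. 1 \<in> w} \<subseteq> cons_one ` link_one H"
  proof
    fix w assume w: "w \<in> {w \<in> H. 1 \<in> w}"
    then have "0 \<notin> w" using assms by (auto simp: mem_subsets_N_iff)
    then obtain a where "0 \<notin> a" "w = cons_one a" using ex_cons_one w by blast
    then show "w \<in> cons_one ` link_one H" using w by (auto simp: link_one_def)
  qed
qed (auto simp: link_one_def cons_one_def)

lemma image_Suc_avoid_one:
  assumes "H \<subseteq> subsets_N e"
  shows "image Suc ` avoid_one H = {w \<in> H. 1 \<notin> w}"
proof
  show "{w \<in> H. 1 \<notin> w} \<subseteq> image Suc ` avoid_one H"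
  proof
    fix w assume w: "w \<in> {w \<in> H. 1 \<notin> w}"
    then have "0 \<notin> w" using assms by (auto simp: mem_subsets_N_iff)
    then obtain b where "0 \<notin> b" "w = Suc ` b" using ex_Suc_image w by blast
    then show "w \<in> image Suc ` avoid_one H" using w by (auto simp: avoid_one_def)
  qed
qed (auto simp: avoid_one_def)

lemma finite_link_one: "finite H \<Longrightarrow> finite (link_one H)"
  by (rule finite_imageD[OF finite_subset[of _ H]])
    (auto simp: link_one_def intro: inj_on_subset[OF inj_on_cons_one])

lemma finite_avoid_one: "finite H \<Longrightarrow> finite (avoid_one H)"
  by (rule finite_imageD[OF finite_subset[of _ H]])
    (auto simp: avoid_one_def intro: inj_on_subset[OF inj_image_Suc])

lemma card_link_one_add_avoid_one:
  assumes "H \<subseteq> subsets_N e" "finite H"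
  shows "card H = card (link_one H) + card (avoid_one H)"
proof -
  have "H = cons_one ` link_one H \<union> image Suc ` avoid_one H"
    "cons_one ` link_one H \<inter> image Suc ` avoid_one H = {}"
    using image_cons_one_link_one[OF assms(1)] image_Suc_avoid_one[OF assms(1)] by blast+
  moreover have "card (cons_one ` link_one H) = card (link_one H)"
    by (rule card_image, rule inj_on_subset[OF inj_on_cons_one]) (auto simp: link_one_def)
  moreover have "card (image Suc ` avoid_one H) = card (avoid_one H)"
    by (rule card_image, rule inj_on_subset[OF inj_image_Suc]) simp
  moreover have "finite (cons_one ` link_one H)" "finite (image Suc ` avoid_one H)"
    using finite_link_one finite_avoid_one assms(2) by auto
  ultimately show ?thesis by (metis card_Un_disjoint)
qed

lemma count_below_Suc_image: "count_below (Suc ` b) (Suc t) = count_below b t"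
proof -
  have "Suc ` b \<inter> {..<Suc t} = Suc ` (b \<inter> {..<t})" by auto
  then show ?thesis by (simp add: count_below_def card_image)
qed

lemma count_below_cons_one:
  assumes "0 \<notin> a"
  shows "count_below (cons_one a) (Suc t) = (if t = 0 then 0 else Suc (count_below a t))"
proof (cases "t = 0")
  case True
  have "cons_one a \<inter> {..<Suc 0} = {}" by (auto simp: cons_one_def)
  then show ?thesis using True by (simp add: count_below_def)
next
  case False
  have "cons_one a \<inter> {..<Suc t} = insert 1 (Suc ` (a \<inter> {..<t}))"
    using False by (auto simp: cons_one_def)
  moreover have "1 \<notin> Suc ` (a \<inter> {..<t})" using assms by auto
  ultimately show ?thesis using False by (simp add: count_below_def card_image)
qed

lemma shift_le_Suc_image: "shift_le v b \<Longrightarrow> shift_le (Suc ` v) (Suc ` b)"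
  unfolding shift_le_def
proof
  fix t assume "\<forall>t. count_below b t \<le> count_below v t"
  then show "count_below (Suc ` b) t \<le> count_below (Suc ` v) t"
    by (cases t) (simp_all add: count_below_Suc_image)
qed

lemma shift_le_cons_one:
  assumes "0 \<notin> v" "0 \<notin> a" "shift_le v a"
  shows "shift_le (cons_one v) (cons_one a)"
  unfolding shift_le_def
proof
  fix t
  show "count_below (cons_one a) t \<le> count_below (cons_one v) t"
    using assms(3) by (cases t) (simp_all add: count_below_cons_one[OF assms(1)]
        count_below_cons_one[OF assms(2)] shift_le_def)
qed

lemma shifted_link_one:
  assumes sh: "shifted e H"
  shows "shifted (e - 1) (link_one H)"
  unfolding shifted_def
proof (intro conjI ballI impI)
  show "link_one H \<subseteq> subsets_N (e - 1)"
    using sh link_one_subset unfolding shifted_def by blast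
  fix a v assume a: "a \<in> link_one H" and v: "v \<in> subsets_N (e - 1)" and "shift_le v a"
  have a': "0 \<notin> a" "cons_one a \<in> H" using a by (auto simp: link_one_def)
  have v': "0 \<notin> v" "finite v" "card v = e - 1" using v by (auto simp: mem_subsets_N_iff)
  have "cons_one a \<in> subsets_N e" using a' sh by (auto simp: shifted_def)
  then have "e \<noteq> 0" using cons_one_mem_subsets_N[OF a'(1)] by auto
  then have "cons_one v \<in> subsets_N e" using v' cons_one_mem_subsets_N by simp
  moreover have "shift_le (cons_one v) (cons_one a)"
    using shift_le_cons_one v' a' \<open>shift_le v a\<close> by blast
  ultimately have "cons_one v \<in> H" using sh a' unfolding shifted_def by blast
  then show "v \<in> link_one H" using v' by (simp add: link_one_def)
qed

lemma shifted_avoid_one: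
  assumes sh: "shifted e H"
  shows "shifted e (avoid_one H)"
  unfolding shifted_def
proof (intro conjI ballI impI)
  show "avoid_one H \<subseteq> subsets_N e"
    using sh avoid_one_subset unfolding shifted_def by blast
  fix b v assume b: "b \<in> avoid_one H" and v: "v \<in> subsets_N e" and "shift_le v b"
  have b': "0 \<notin> b" "Suc ` b \<in> H" using b by (auto simp: avoid_one_def)
  have v': "0 \<notin> v" "finite v" "card v = e" using v by (auto simp: mem_subsets_N_iff)
  have "Suc ` v \<in> subsets_N e" using v' Suc_image_mem_subsets_N by simp
  moreover have "shift_le (Suc ` v) (Suc ` b)"
    using shift_le_Suc_image \<open>shift_le v b\<close> by blast
  ultimately have "Suc ` v \<in> H" using sh b' unfolding shifted_def by blast
  then show "v \<in> avoid_one H" using v' by (simp add: avoid_one_def)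
qed

lemma colex_rank_Suc_image: "colex_rank (Suc ` b) = 2 * colex_rank b"
  unfolding colex_rank_def by (simp add: sum.reindex sum_distrib_left)

lemma colex_rank_cons_one:
  assumes "0 \<notin> a" "finite a"
  shows "colex_rank (cons_one a) = 2 + 2 * colex_rank a"
proof -
  have "1 \<notin> Suc ` a" using assms by auto
  then have "colex_rank (cons_one a) = 2 ^ 1 + colex_rank (Suc ` a)"
    using assms(2) by (simp add: cons_one_def colex_rank_def)
  then show ?thesis by (simp add: colex_rank_Suc_image)
qed

lemma compressed_link_one:
  assumes C: "compressed_in 0 e C"
  shows "compressed_in 0 (e - 1) (link_one C)"
  unfolding compressed_in_0_iff
proof (intro conjI ballI impI)
  have fC: "finite C" "C \<subseteq> subsets_N e"
    and down: "\<forall>u\<in>C. \<forall>v\<in>subsets_N e. colex_rank v < colex_rank u \<longrightarrow> v \<in> C"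
    using C by (simp_all add: compressed_in_0_iff)
  show "finite (link_one C)" using finite_link_one fC by blast
  show "link_one C \<subseteq> subsets_N (e - 1)" using link_one_subset fC by blast
  fix a v assume a: "a \<in> link_one C" and v: "v \<in> subsets_N (e - 1)" and less: "colex_rank v < colex_rank a"
  have a': "0 \<notin> a" "cons_one a \<in> C" using a by (auto simp: link_one_def)
  have "cons_one a \<in> subsets_N e" using a' fC by auto
  then have "finite a" "e \<noteq> 0" using cons_one_mem_subsets_N[OF a'(1)] by auto
  have v': "0 \<notin> v" "finite v" "card v = e - 1" using v by (auto simp: mem_subsets_N_iff)
  have "cons_one v \<in> subsets_N e" using cons_one_mem_subsets_N v' \<open>e \<noteq> 0\<close> by simp
  moreover have "colex_rank (cons_one v) < colex_rank (cons_one a)"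
    using colex_rank_cons_one a' v' \<open>finite a\<close> less by simp
  ultimately have "cons_one v \<in> C" using down a' by blast
  then show "v \<in> link_one C" using v' by (simp add: link_one_def)
qed

section \<open>Increasing maps and the recursion for \<open>Inc\<close>\<close>

lemma Inc1_D:
  assumes "\<pi> \<in> Inc1" "1 \<le> j"
  shows "1 \<le> \<pi> j" "\<pi> j < \<pi> (Suc j)" "\<pi> j \<le> Suc j"
  using assms unfolding Inc1_def by auto

lemma Inc1_less:
  assumes "\<pi> \<in> Inc1" "1 \<le> i" "i < j"
  shows "\<pi> i < \<pi> j"
proof -
  have "(\<lambda>n. \<pi> (n + i)) 0 < (\<lambda>n. \<pi> (n + i)) (j - i)"
    by (rule lift_Suc_mono_less) (use Inc1_D(2)[OF assms(1)] assms(2,3) in auto)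
  then show ?thesis using assms(3) by simp
qed

lemma Inc1_ge:
  assumes "\<pi> \<in> Inc1" "1 \<le> j"
  shows "j \<le> \<pi> j"
  using assms(2)
proof (induction j rule: dec_induct)
  case base
  then show ?case using Inc1_D[OF assms(1), of 1] by simp
next
  case (step n)
  then show ?case using Inc1_D[OF assms(1), of n] by simp
qed

lemma Inc1_image_pos:
  assumes "\<pi> \<in> Inc1" "0 \<notin> u"
  shows "0 \<notin> \<pi> ` u"
proof
  assume "0 \<in> \<pi> ` u"
  then obtain x where "x \<in> u" "\<pi> x = 0" by auto
  then show False using Inc1_D(1)[OF assms(1) one_le_of_zero_notin[OF assms(2)]] by fastforce
qed

lemma Inc1_inj_on:
  assumes "\<pi> \<in> Inc1" "0 \<notin> u"
  shows "inj_on \<pi> u"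
proof (rule inj_onI)
  fix i j assume "i \<in> u" "j \<in> u" and eq: "\<pi> i = \<pi> j"
  then have "1 \<le> i" "1 \<le> j" using assms(2) one_le_of_zero_notin by blast+
  then show "i = j"
    using Inc1_less[OF assms(1), of i j] Inc1_less[OF assms(1), of j i] eq
    by (cases i j rule: linorder_cases) auto
qed

lemma Suc_mem_Inc1: "Suc \<in> Inc1"
  unfolding Inc1_def by auto

text \<open>The next two maps are the conjugates \<open>\<pi>'\<close> of \<open>\<pi>\<close> by \<open>cons_one\<close>, in the two directions:
  \<open>\<pi>' (cons_one a) = cons_one (\<pi> a)\<close>.\<close>
lemma Inc1_shift_right:
  assumes "\<pi> \<in> Inc1"
  shows "(\<lambda>j. if j \<le> 1 then j else Suc (\<pi> (j - 1))) \<in> Inc1"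
  unfolding Inc1_def
proof (intro CollectI allI impI conjI)
  fix j :: nat assume j: "j \<ge> 1"
  show "1 \<le> (if j \<le> 1 then j else Suc (\<pi> (j - 1)))" using j by simp
  show "(if j \<le> 1 then j else Suc (\<pi> (j - 1))) < (if j + 1 \<le> 1 then j + 1 else Suc (\<pi> (j + 1 - 1)))"
    using Inc1_D[OF assms, of 1] Inc1_D[OF assms, of "j - 1"] j by (cases "j = 1") simp_all
  show "(if j \<le> 1 then j else Suc (\<pi> (j - 1))) \<le> j + 1"
    using Inc1_D[OF assms, of "j - 1"] j by (cases "j = 1") simp_all
qed

lemma Inc1_shift_left:
  assumes "\<pi> \<in> Inc1" "\<pi> 1 = 1"
  shows "(\<lambda>j. \<pi> (Suc j) - 1) \<in> Inc1"
  unfolding Inc1_def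
proof (intro CollectI allI impI conjI)
  fix j :: nat assume j: "j \<ge> 1"
  have "\<pi> 1 < \<pi> (Suc j)" using Inc1_less[OF assms(1), of 1 "Suc j"] j by simp
  then show "1 \<le> \<pi> (Suc j) - 1" "\<pi> (Suc j) - 1 < \<pi> (Suc (j + 1)) - 1"
      "\<pi> (Suc j) - 1 \<le> j + 1"
    using Inc1_D[OF assms(1), of "Suc j"] assms(2) by simp_all
qed

lemma count_below_image_le:
  assumes "finite u" "inj_on f u" "\<forall>j\<in>u. f j \<le> j + k"
  shows "count_below u t \<le> count_below (f ` u) (t + k)"
proof -
  have "card (u \<inter> {..<t}) = card (f ` (u \<inter> {..<t}))"
    using assms(2) by (intro card_image[symmetric]) (rule inj_on_subset, auto)
  also have "\<dots> \<le> card (f ` u \<inter> {..<t + k})"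
    using assms(1,3) by (intro card_mono) fastforce+
  finally show ?thesis by (simp add: count_below_def)
qed

lemma IncF_mono: "F \<subseteq> F' \<Longrightarrow> IncF F \<subseteq> IncF F'"
  unfolding IncF_def by blast

lemma finite_IncF:
  assumes "finite F" "F \<subseteq> subsets_N e"
  shows "finite (IncF F)"
proof -
  define M where "M = Max (\<Union>F)"
  have fin: "finite (\<Union>F)"
    using assms(2) by (intro finite_Union[OF assms(1)]) (auto simp: mem_subsets_N_iff)
  have "IncF F \<subseteq> Pow {..Suc M}"
  proof
    fix v assume "v \<in> IncF F"
    then obtain u \<pi> where u: "u \<in> F" "\<pi> \<in> Inc1" "v = \<pi> ` u" unfolding IncF_def by blast
    have "\<pi> x \<le> Suc M" if "x \<in> u" for x
    proof -
      have "x \<le> M" using that u(1) Max_ge[OF fin, of x] by (auto simp: M_def)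
      moreover have "0 \<notin> u" using u(1) assms(2) by (auto simp: mem_subsets_N_iff)
      then have "1 \<le> x" using that by (rule one_le_of_zero_notin)
      ultimately show ?thesis using Inc1_D(3)[OF u(2), of x] by simp
    qed
    then show "v \<in> Pow {..Suc M}" using u by auto
  qed
  then show ?thesis by (rule finite_subset) simp
qed

lemma IncF_subset:
  assumes "F \<subseteq> subsets_N e"
  shows "IncF F \<subseteq> subsets_N e"
proof
  fix v assume "v \<in> IncF F"
  then obtain u \<pi> where u: "u \<in> F" "\<pi> \<in> Inc1" "v = \<pi> ` u" unfolding IncF_def by blast
  have u': "finite u" "card u = e" "0 \<notin> u" using u(1) assms by (auto simp: mem_subsets_N_iff)
  have "card v = e" using u(3) u' card_image[OF Inc1_inj_on[OF u(2) u'(3)]] by simp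
  moreover have "0 \<notin> v" using u(3) Inc1_image_pos[OF u(2) u'(3)] by simp
  ultimately show "v \<in> subsets_N e" using u(3) u'(1) by (simp add: mem_subsets_N_iff)
qed

lemma Inc_image_mem_cons_one:
  assumes HS: "H \<subseteq> subsets_N e" and u: "u \<in> H" and pi: "\<pi> \<in> Inc1" and one: "1 \<in> \<pi> ` u"
  shows "\<pi> ` u \<in> cons_one ` IncF (link_one H)"
proof -
  have u0: "0 \<notin> u" using u HS by (auto simp: mem_subsets_N_iff)
  obtain j where j: "j \<in> u" "\<pi> j = 1" using one by auto
  have "1 \<le> j" using u0 j(1) by (rule one_le_of_zero_notin)
  then have "j = 1" using Inc1_ge[OF pi, of j] j(2) by simp
  then have "u \<in> cons_one ` link_one H"
    using image_cons_one_link_one[OF HS] u j(1) by blast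
  then obtain a where a: "a \<in> link_one H" "u = cons_one a" by blast
  define \<rho> where "\<rho> = (\<lambda>j. \<pi> (Suc j) - 1)"
  have "\<rho> \<in> Inc1" unfolding \<rho>_def using Inc1_shift_left pi j \<open>j = 1\<close> by simp
  have "Suc (\<rho> x) = \<pi> (Suc x)" for x
    using Inc1_D(1)[OF pi, of "Suc x"] by (simp add: \<rho>_def)
  then have "\<pi> ` u = cons_one (\<rho> ` a)"
    using a(2) j \<open>j = 1\<close> by (simp add: cons_one_def image_image)
  then show ?thesis using a(1) \<open>\<rho> \<in> Inc1\<close> unfolding IncF_def by blast
qed

text \<open>This is where shiftedness enters: deleting 1 from the range of \<open>\<pi>\<close> moves every element of
  \<open>u\<close> down by at most one position.\<close>
lemma Inc_image_mem_Suc_image: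
  assumes sh: "shifted e H" and u: "u \<in> H" and pi: "\<pi> \<in> Inc1" and one: "1 \<notin> \<pi> ` u"
  shows "\<pi> ` u \<in> image Suc ` H"
proof -
  have u': "finite u" "card u = e" "0 \<notin> u" using sh u by (auto simp: shifted_def mem_subsets_N_iff)
  obtain b where b: "0 \<notin> b" "\<pi> ` u = Suc ` b" using ex_Suc_image[OF Inc1_image_pos[OF pi u'(3)] one] by blast
  have inj: "inj_on \<pi> u" using Inc1_inj_on pi u'(3) by blast
  have "\<forall>j\<in>u. \<pi> j \<le> j + 1" using Inc1_D(3)[OF pi] one_le_of_zero_notin[OF u'(3)] by simp
  then have "count_below u t \<le> count_below b t" for t
    using count_below_image_le[OF u'(1) inj, of 1 t] b(2) count_below_Suc_image by simp
  then have "shift_le b u" by (simp add: shift_le_def)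
  moreover have "b \<in> subsets_N e"
  proof -
    have "finite (Suc ` b)" "card (Suc ` b) = e"
      using b(2) u'(1,2) card_image[OF inj] by (metis finite_imageI)+
    then show ?thesis using b(1) by (simp add: mem_subsets_N_iff finite_image_iff card_image)
  qed
  ultimately have "b \<in> H" using sh u unfolding shifted_def by blast
  then show ?thesis using b(2) by blast
qed

lemma cons_one_IncF_link_one_subset: "cons_one ` IncF (link_one H) \<subseteq> IncF H"
proof
  fix v assume "v \<in> cons_one ` IncF (link_one H)"
  then obtain a \<pi> where a: "a \<in> link_one H" and pi: "\<pi> \<in> Inc1" and v: "v = cons_one (\<pi> ` a)"
    unfolding IncF_def by blast
  have a': "0 \<notin> a" "cons_one a \<in> H" using a by (auto simp: link_one_def)
  define \<pi>' where "\<pi>' = (\<lambda>j. if j \<le> 1 then j else Suc (\<pi> (j - 1)))"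
  have "\<pi>' \<in> Inc1" unfolding \<pi>'_def using Inc1_shift_right[OF pi] .
  moreover have "\<pi>' ` cons_one a = v"
  proof -
    have "\<pi>' (Suc x) = Suc (\<pi> x)" if "x \<in> a" for x
      using one_le_of_zero_notin[OF a'(1) that] by (simp add: \<pi>'_def)
    moreover have "\<pi>' 1 = 1" by (simp add: \<pi>'_def)
    ultimately show ?thesis
      unfolding v cons_one_def image_insert image_image by (simp cong: image_cong)
  qed
  ultimately show "v \<in> IncF H" using a'(2) unfolding IncF_def by blast
qed

lemma IncF_shifted_eq:
  assumes sh: "shifted e H"
  shows "IncF H = image Suc ` H \<union> cons_one ` IncF (link_one H)"
proof
  have HS: "H \<subseteq> subsets_N e" using sh by (simp add: shifted_def)
  show "IncF H \<subseteq> image Suc ` H \<union> cons_one ` IncF (link_one H)"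
  proof
    fix v assume "v \<in> IncF H"
    then obtain u \<pi> where "u \<in> H" "\<pi> \<in> Inc1" "v = \<pi> ` u" unfolding IncF_def by blast
    then show "v \<in> image Suc ` H \<union> cons_one ` IncF (link_one H)"
      using Inc_image_mem_cons_one[OF HS] Inc_image_mem_Suc_image[OF sh] by (cases "1 \<in> v") auto
  qed
  have "image Suc ` H \<subseteq> IncF H" using Suc_mem_Inc1 unfolding IncF_def by blast
  then show "image Suc ` H \<union> cons_one ` IncF (link_one H) \<subseteq> IncF H"
    using cons_one_IncF_link_one_subset by blast
qed

lemma card_IncF_shifted:
  assumes sh: "shifted e H" and fin: "finite H"
  shows "card (IncF H) = card H + card (IncF (link_one H))"
proof -
  have HS: "H \<subseteq> subsets_N e" using sh by (simp add: shifted_def)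
  have Inc_link: "finite (IncF (link_one H))" "IncF (link_one H) \<subseteq> subsets_N (e - 1)"
    using finite_IncF IncF_subset finite_link_one[OF fin] link_one_subset[OF HS] by blast+
  have "1 \<notin> w" if "w \<in> image Suc ` H" for w
    using that HS by (auto simp: mem_subsets_N_iff)
  then have "image Suc ` H \<inter> cons_one ` IncF (link_one H) = {}"
    using one_mem_cons_one by blast
  moreover have "card (image Suc ` H) = card H"
    by (rule card_image, rule inj_on_subset[OF inj_image_Suc]) simp
  moreover have "card (cons_one ` IncF (link_one H)) = card (IncF (link_one H))"
    using Inc_link(2)
    by (intro card_image inj_on_subset[OF inj_on_cons_one]) (auto simp: mem_subsets_N_iff)
  ultimately show ?thesis
    using IncF_shifted_eq[OF sh] card_Un_disjoint fin Inc_link(1) by (metis finite_imageI)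
qed

section \<open>Shadows\<close>

definition shadow :: "nat set set \<Rightarrow> nat set set" where
  "shadow F = {w - {x} | w x. w \<in> F \<and> x \<in> w}"

lemma finite_shadow:
  assumes "finite F" "F \<subseteq> subsets_N e"
  shows "finite (shadow F)"
proof -
  have "shadow F = (\<lambda>(w, x). w - {x}) ` Sigma F (\<lambda>w. w)" by (auto simp: shadow_def)
  moreover have "finite (Sigma F (\<lambda>w. w))"
    using assms by (intro finite_SigmaI) (auto simp: mem_subsets_N_iff)
  ultimately show ?thesis by simp
qed

lemma shadowI: "w \<in> F \<Longrightarrow> x \<in> w \<Longrightarrow> w - {x} \<in> shadow F"
  unfolding shadow_def by blast

lemma shadow_mono: "F \<subseteq> F' \<Longrightarrow> shadow F \<subseteq> shadow F'"
  unfolding shadow_def by blast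

lemma shadow_avoid_one_subset_link_one:
  assumes sh: "shifted e H" and e: "1 \<le> e"
  shows "shadow (avoid_one H) \<subseteq> link_one H"
proof
  fix v assume "v \<in> shadow (avoid_one H)"
  then obtain b x where b: "b \<in> avoid_one H" and x: "x \<in> b" and v: "v = b - {x}"
    unfolding shadow_def by blast
  have b': "0 \<notin> b" "Suc ` b \<in> H" using b by (auto simp: avoid_one_def)
  then have fb: "finite b" "card b = e"
    using sh Suc_image_mem_subsets_N unfolding shifted_def by auto
  have v0: "0 \<notin> v" using b' v by auto
  have "cons_one v = insert 1 (Suc ` b - {Suc x})"
    unfolding v cons_one_def by (auto simp: inj_image_eq_iff)
  moreover have "shift_le (insert 1 (Suc ` b - {Suc x})) (Suc ` b)"
    using fb x b'(1) one_le_of_zero_notin[OF b'(1) x] by (intro shift_le_shift_down) auto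
  moreover have "cons_one v \<in> subsets_N e"
    using cons_one_mem_subsets_N[OF v0] fb x v e by simp
  ultimately have "cons_one v \<in> H" using sh b' unfolding shifted_def by auto
  then show "v \<in> link_one H" using v0 by (simp add: link_one_def)
qed

lemma shadow_mem_without_one:
  assumes sh: "shifted e B" and w: "w \<in> B" "x \<in> w" and one: "1 \<notin> w - {x}"
  shows "w - {x} \<in> image Suc ` link_one B"
proof -
  have w': "finite w" "card w = e" "0 \<notin> w"
    using w sh by (auto simp: shifted_def mem_subsets_N_iff)
  obtain a where a: "0 \<notin> a" "w - {x} = Suc ` a"
    using ex_Suc_image[of "w - {x}"] w'(3) one by blast
  have "insert 1 (w - {x}) \<in> B"
  proof (cases "1 \<in> w")
    case True
    then have "insert 1 (w - {x}) = w" using one by auto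
    then show ?thesis using w(1) by simp
  next
    case False
    have "1 < x" using False w(2) one_le_of_zero_notin[OF w'(3) w(2)] by (cases "x = 1") auto
    then have "shift_le (insert 1 (w - {x})) w"
      using w'(1) w(2) False by (intro shift_le_shift_down)
    moreover have "insert 1 (w - {x}) \<in> subsets_N e"
      using w' w(2) False card_insert_Diff_swap[OF w'(1) w(2) False] by (simp add: mem_subsets_N_iff)
    ultimately show ?thesis using sh w(1) unfolding shifted_def by blast
  qed
  then have "a \<in> link_one B" using a by (simp add: link_one_def cons_one_def)
  then show ?thesis using a(2) by blast
qed

lemma shadow_link_one_subset: "image Suc ` link_one B \<union> cons_one ` shadow (link_one B) \<subseteq> shadow B"
proof
  fix v assume "v \<in> image Suc ` link_one B \<union> cons_one ` shadow (link_one B)"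
  then consider (avoid) a where "a \<in> link_one B" "v = Suc ` a"
    | (link) a x where "a \<in> link_one B" "x \<in> a" "v = cons_one (a - {x})"
    unfolding shadow_def by blast
  then show "v \<in> shadow B"
  proof cases
    case avoid
    then have "0 \<notin> a" "cons_one a \<in> B" by (auto simp: link_one_def)
    moreover from this(1) have "v = cons_one a - {1}" using avoid(2) by (auto simp: cons_one_def)
    ultimately show ?thesis using shadowI[OF _ one_mem_cons_one] by simp
  next
    case link
    then have "0 \<notin> a" "cons_one a \<in> B" by (auto simp: link_one_def)
    moreover from this(1) have "v = cons_one a - {Suc x}"
      using link(2,3) by (auto simp: cons_one_def)
    moreover have "Suc x \<in> cons_one a" using link(2) by (simp add: cons_one_def)
    ultimately show ?thesis using shadowI by simp
  qed
qed

lemma shadow_shifted_eq: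
  assumes sh: "shifted e B"
  shows "shadow B = image Suc ` link_one B \<union> cons_one ` shadow (link_one B)"
proof
  have BS: "B \<subseteq> subsets_N e" using sh by (simp add: shifted_def)
  show "shadow B \<subseteq> image Suc ` link_one B \<union> cons_one ` shadow (link_one B)"
  proof
    fix v assume "v \<in> shadow B"
    then obtain w x where w: "w \<in> B" "x \<in> w" and v: "v = w - {x}"
      unfolding shadow_def by blast
    show "v \<in> image Suc ` link_one B \<union> cons_one ` shadow (link_one B)"
    proof (cases "1 \<in> v")
      case False
      then show ?thesis using shadow_mem_without_one[OF sh w] v False by simp
    next
      case True
      then have "w \<in> cons_one ` link_one B" "x \<noteq> 1"
        using image_cons_one_link_one[OF BS] w v by auto
      then obtain a where a: "a \<in> link_one B" "w = cons_one a" by blast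
      then obtain x' where x': "x' \<in> a" "x = Suc x'"
        using w(2) \<open>x \<noteq> 1\<close> by (auto simp: cons_one_def)
      have "0 \<notin> a" using a(1) by (simp add: link_one_def)
      then have "v = cons_one (a - {x'})" using v a(2) x' by (auto simp: cons_one_def)
      moreover have "a - {x'} \<in> shadow (link_one B)" using a(1) x'(1) by (rule shadowI)
      ultimately show ?thesis by blast
    qed
  qed
  show "image Suc ` link_one B \<union> cons_one ` shadow (link_one B) \<subseteq> shadow B"
    by (rule shadow_link_one_subset)
qed

lemma card_shadow_shifted:
  assumes sh: "shifted e B" and fin: "finite B"
  shows "card (shadow B) = card (link_one B) + card (shadow (link_one B))"
proof -
  have BS: "B \<subseteq> subsets_N e" using sh by (simp add: shifted_def)
  have fin_link: "finite (link_one B)" using finite_link_one[OF fin] .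
  have fin_shadow: "finite (shadow (link_one B))"
    using finite_shadow[OF fin_link link_one_subset[OF BS]] .
  have pos: "\<forall>w\<in>shadow (link_one B). 0 \<notin> w" unfolding shadow_def link_one_def by blast
  have "1 \<notin> w" if "w \<in> image Suc ` link_one B" for w
    using that by (auto simp: link_one_def)
  then have "image Suc ` link_one B \<inter> cons_one ` shadow (link_one B) = {}"
    using one_mem_cons_one by blast
  moreover have "card (image Suc ` link_one B) = card (link_one B)"
    by (rule card_image, rule inj_on_subset[OF inj_image_Suc]) simp
  moreover have "card (cons_one ` shadow (link_one B)) = card (shadow (link_one B))"
    using pos by (intro card_image inj_on_subset[OF inj_on_cons_one]) auto
  ultimately show ?thesis
    unfolding shadow_shifted_eq[OF sh] using fin_link fin_shadow by (simp add: card_Un_disjoint)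
qed

section \<open>Compressed families minimise links and shadows\<close>

definition first_gap :: "nat set \<Rightarrow> nat" where
  "first_gap a = (LEAST x. 0 < x \<and> x \<notin> a)"

lemma first_gap_spec:
  assumes "finite a"
  shows "0 < first_gap a" "first_gap a \<notin> a" "\<And>t. 0 < t \<Longrightarrow> t < first_gap a \<Longrightarrow> t \<in> a"
proof -
  have "Suc (Max (insert 0 a)) \<notin> a"
    using assms by (metis Max_ge finite_insert insertCI Suc_n_not_le_n)
  then have "\<exists>x. 0 < x \<and> x \<notin> a" by blast
  then show "0 < first_gap a" "first_gap a \<notin> a"
    using LeastI_ex[of "\<lambda>x. 0 < x \<and> x \<notin> a"] by (auto simp: first_gap_def)
  show "t \<in> a" if "0 < t" "t < first_gap a" for t
    using that not_less_Least[of t "\<lambda>x. 0 < x \<and> x \<notin> a"] unfolding first_gap_def by blast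
qed

text \<open>Below its first gap, \<open>insert (first_gap a) a\<close> contains every positive integer, so a set
  of the same size that lacks one of these must have lost it to a larger element.\<close>
lemma first_gap_less_colex_witness:
  assumes fa: "finite a" and a0: "0 \<notin> a" and fy: "finite y" "0 \<notin> y"
    and card: "card y = card (insert (first_gap a) a)"
    and s: "s \<in> insert (first_gap a) a" "s \<notin> y" "\<forall>t>s. t \<in> y \<longleftrightarrow> t \<in> insert (first_gap a) a"
  shows "first_gap a < s"
proof (rule ccontr)
  define z where "z = insert (first_gap a) a"
  assume "\<not> first_gap a < s"
  then have "s \<le> first_gap a" by simp
  have fz: "finite z" "0 \<notin> z" using fa a0 first_gap_spec(1)[OF fa] by (auto simp: z_def)
  have "s \<noteq> 0" using s(1) fz(2) unfolding z_def by metis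
  have "z \<inter> {..<Suc s} = {1..s}"
  proof (rule set_eqI)
    fix t
    have "t \<in> z" if "0 < t" "t \<le> s"
      using that \<open>s \<le> first_gap a\<close> first_gap_spec(3)[OF fa, of t] by (cases "t = first_gap a") (auto simp: z_def)
    then show "t \<in> z \<inter> {..<Suc s} \<longleftrightarrow> t \<in> {1..s}"
      using fz(2) by (cases t) auto
  qed
  then have "count_below z (Suc s) = s" by (simp add: count_below_def)
  moreover have "y \<inter> {..<Suc s} \<subseteq> {1..<s}"
    using fy(2) s(2) one_le_of_zero_notin[OF fy(2)] by (auto simp: less_Suc_eq)
  then have "count_below y (Suc s) \<le> s - 1"
    unfolding count_below_def using card_mono[of "{1..<s}"] by fastforce
  moreover have "y \<inter> {Suc s..} = z \<inter> {Suc s..}" using s(3) by (auto simp: z_def)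
  ultimately show False
    using card_eq_count_below_add[OF fy(1), of "Suc s"] card_eq_count_below_add[OF fz(1), of "Suc s"]
      card \<open>s \<noteq> 0\<close> unfolding z_def by simp
qed

lemma colex_less_cons_one:
  assumes fa: "finite a" and a0: "0 \<notin> a" and fy: "finite y" "0 \<notin> y"
    and card: "card y = card (insert (first_gap a) a)"
    and less: "colex_less y (insert (first_gap a) a)"
  shows "colex_less (Suc ` y) (cons_one a)"
proof -
  obtain s where s: "s \<in> insert (first_gap a) a" "s \<notin> y"
    "\<forall>t>s. t \<in> y \<longleftrightarrow> t \<in> insert (first_gap a) a"
    using less by (auto simp: colex_less_def)
  have gap: "first_gap a < s"
    using first_gap_less_colex_witness[OF fa a0 fy card s] .
  show ?thesis
    unfolding colex_less_def
  proof (intro bexI conjI allI impI)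
    show "Suc s \<in> cons_one a" "Suc s \<notin> Suc ` y" using s gap by (auto simp: cons_one_def)
    fix t assume "Suc s < t"
    then obtain t' where "t = Suc t'" "s < t'" by (cases t) auto
    then show "t \<in> Suc ` y \<longleftrightarrow> t \<in> cons_one a"
      using s(3) gap by (auto simp: cons_one_def)
  qed
qed

text \<open>The sets preceding \<open>a \<union> {first_gap a}\<close> are, shifted by one, predecessors of
  \<open>cons_one a\<close>.\<close>
lemma colex_less_insert_first_gap_mem_avoid_one:
  assumes C: "compressed_in 0 e C" and a: "a \<in> link_one C" and y: "y \<in> subsets_N e"
    and less: "colex_less y (insert (first_gap a) a)"
  shows "y \<in> avoid_one C"
proof -
  have fC: "C \<subseteq> subsets_N e"
    and down: "\<forall>u\<in>C. \<forall>v\<in>subsets_N e. colex_rank v < colex_rank u \<longrightarrow> v \<in> C"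
    using C by (simp_all add: compressed_in_0_iff)
  have a': "0 \<notin> a" "cons_one a \<in> C" using a by (auto simp: link_one_def)
  then have fa: "finite a" "Suc (card a) = e" using fC cons_one_mem_subsets_N by auto
  have fy: "finite y" "0 \<notin> y" "card y = e" using y by (simp_all add: mem_subsets_N_iff)
  have "card y = card (insert (first_gap a) a)" using fa fy(3) first_gap_spec(2)[OF fa(1)] by simp
  then have "colex_less (Suc ` y) (cons_one a)"
    using colex_less_cons_one[OF fa(1) a'(1) fy(1,2) _ less] by simp
  then have "colex_rank (Suc ` y) < colex_rank (cons_one a)"
    using colex_less_imp_rank_less fy(1) fa(1) by (simp add: cons_one_def)
  moreover have "Suc ` y \<in> subsets_N e" using Suc_image_mem_subsets_N fy by simp
  ultimately have "Suc ` y \<in> C" using down a'(2) by blast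
  then show ?thesis using fy(2) by (simp add: avoid_one_def)
qed

lemma link_one_subset_shadow:
  assumes C: "compressed_in 0 e C" and D: "compressed_in 0 e D"
    and card_D: "card D = card (avoid_one C) + 1"
  shows "link_one C \<subseteq> shadow D"
proof
  fix a assume a: "a \<in> link_one C"
  have fD: "D \<subseteq> subsets_N e"
    and downD: "\<forall>u\<in>D. \<forall>v\<in>subsets_N e. colex_rank v < colex_rank u \<longrightarrow> v \<in> D"
    using D by (simp_all add: compressed_in_0_iff)
  have "0 \<notin> a" "cons_one a \<in> C" using a by (auto simp: link_one_def)
  then have fa: "finite a" "Suc (card a) = e"
    using C cons_one_mem_subsets_N by (auto simp: compressed_in_0_iff)
  define z where "z = insert (first_gap a) a"
  have z: "finite z" "z \<in> subsets_N e"
    using fa first_gap_spec[OF fa(1)] \<open>0 \<notin> a\<close> by (auto simp: z_def mem_subsets_N_iff)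
  have "z \<in> D"
  proof (rule ccontr)
    assume "z \<notin> D"
    have "D \<subseteq> avoid_one C"
    proof
      fix y assume y: "y \<in> D"
      then have fy: "finite y" "y \<in> subsets_N e" using fD by (auto simp: mem_subsets_N_iff)
      have "colex_rank y \<noteq> colex_rank z"
        using y \<open>z \<notin> D\<close> colex_rank_eq_iff[OF fy(1) z(1)] by auto
      moreover have "\<not> colex_rank z < colex_rank y" using downD y z(2) \<open>z \<notin> D\<close> by blast
      ultimately have "colex_rank y < colex_rank z" by linarith
      then have "colex_less y z" using colex_rank_less_iff[OF fy(1) z(1)] by simp
      then show "y \<in> avoid_one C"
        using colex_less_insert_first_gap_mem_avoid_one[OF C a fy(2)] by (simp add: z_def)
    qed
    moreover have "finite (avoid_one C)"
      using C finite_avoid_one by (simp add: compressed_in_def)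
    ultimately have "card D \<le> card (avoid_one C)" by (rule card_mono[rotated])
    then show False using card_D by simp
  qed
  moreover have "a = z - {first_gap a}" using first_gap_spec(2)[OF fa(1)] by (simp add: z_def)
  ultimately show "a \<in> shadow D" using shadowI[of z D "first_gap a"] by (simp add: z_def)
qed

lemma link_one_nonempty:
  assumes sh: "shifted e H" and e: "1 \<le> e" and "H \<noteq> {}"
  shows "link_one H \<noteq> {}"
proof -
  have HS: "H \<subseteq> subsets_N e" using sh by (simp add: shifted_def)
  obtain u where u: "u \<in> H" using assms(3) by blast
  have u': "finite u" "0 \<notin> u" "card u = e" using u HS by (auto simp: mem_subsets_N_iff)
  have "\<exists>v\<in>H. 1 \<in> v"
  proof (cases "1 \<in> u")
    case False
    obtain k where k: "k \<in> u" using u' e by fastforce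
    then have "1 < k" using False one_le_of_zero_notin[OF u'(2) k] by (cases "k = 1") auto
    then have "shift_le (insert 1 (u - {k})) u"
      using u'(1) k False by (intro shift_le_shift_down)
    moreover have "insert 1 (u - {k}) \<in> subsets_N e"
      using u' k False card_insert_Diff_swap[OF u'(1) k False] by (simp add: mem_subsets_N_iff)
    ultimately have "insert 1 (u - {k}) \<in> H" using sh u unfolding shifted_def by blast
    then show ?thesis by blast
  qed (use u in blast)
  then show ?thesis using image_cons_one_link_one[OF HS] by blast
qed

lemma card_operator_link_one_le:
  fixes \<Phi> :: "nat set set \<Rightarrow> nat set set"
  assumes mono: "\<And>F F'. F \<subseteq> F' \<Longrightarrow> \<Phi> F \<subseteq> \<Phi> F'"
    and fin: "\<And>F. finite F \<Longrightarrow> F \<subseteq> subsets_N e \<Longrightarrow> finite (\<Phi> F)"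
    and minimal: "\<And>B C'. shifted e B \<Longrightarrow> finite B \<Longrightarrow> compressed_in 0 e C' \<Longrightarrow>
      card C' = card B \<Longrightarrow> card (\<Phi> C') \<le> card (\<Phi> B)"
    and H: "shifted (Suc e) H" "finite H" and C: "compressed_in 0 (Suc e) C"
    and le: "card (link_one C) \<le> card (link_one H)"
  shows "card (\<Phi> (link_one C)) \<le> card (\<Phi> (link_one H))"
proof -
  have link_H: "shifted e (link_one H)" "finite (link_one H)"
    using shifted_link_one[OF H(1)] finite_link_one[OF H(2)] by simp_all
  then have "link_one H \<subseteq> subsets_N e" by (simp add: shifted_def)
  then obtain C' where C': "compressed_in 0 e C'" "card C' = card (link_one H)"
    using compressed_exists[OF link_H(2)] by blast
  have "link_one C \<subseteq> C'"
    using compressed_subset_of_card_le[OF _ C'(1)] compressed_link_one[OF C] le C'(2) by simp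
  then have "card (\<Phi> (link_one C)) \<le> card (\<Phi> C')"
    using mono fin C'(1) by (intro card_mono) (auto simp: compressed_in_0_iff)
  also have "\<dots> \<le> card (\<Phi> (link_one H))"
    using minimal[OF link_H C'(1)] C'(2) by simp
  finally show ?thesis .
qed

text \<open>If the link of \<open>C\<close> were larger, then \<open>avoid_one C\<close> would be smaller than \<open>avoid_one H\<close>;
  the shadow bound for the family \<open>avoid_one H\<close>, whose shadow lies in \<open>link_one H\<close>, then
  contradicts \<open>link_one_subset_shadow\<close>.\<close>
lemma card_link_one_le_of_shadow:
  assumes shadow_min: "\<And>B C'. shifted e B \<Longrightarrow> finite B \<Longrightarrow> compressed_in 0 e C' \<Longrightarrow>
      card C' = card B \<Longrightarrow> card B < card H \<Longrightarrow> card (shadow C') \<le> card (shadow B)"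
    and H: "shifted e H" "finite H" and C: "compressed_in 0 e C" and card: "card C = card H"
    and e: "1 \<le> e"
  shows "card (link_one C) \<le> card (link_one H)"
proof (rule ccontr)
  assume "\<not> ?thesis"
  then have less: "card (link_one H) < card (link_one C)" by simp
  have HS: "H \<subseteq> subsets_N e" using H(1) by (simp add: shifted_def)
  have fC: "finite C" "C \<subseteq> subsets_N e" using C by (simp_all add: compressed_in_0_iff)
  have split: "card H = card (link_one H) + card (avoid_one H)"
    "card C = card (link_one C) + card (avoid_one C)"
    using card_link_one_add_avoid_one HS H(2) fC by blast+
  define B where "B = avoid_one H"
  have B: "shifted e B" "finite B" "B \<subseteq> subsets_N e"
    using shifted_avoid_one[OF H(1)] finite_avoid_one[OF H(2)] unfolding B_def shifted_def by auto
  have "H \<noteq> {}" using less card split by auto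
  then have "link_one H \<noteq> {}" using link_one_nonempty H(1) e by blast
  then have "card B < card H" using finite_link_one[OF H(2)] split(1) by (simp add: B_def card_gt_0_iff)
  obtain CB where CB: "compressed_in 0 e CB" "card CB = card B"
    using compressed_exists[OF B(2,3)] by blast
  obtain D where D: "compressed_in 0 e D" "card D = card (avoid_one C) + 1"
    using compressed_exists[OF B(2,3), of "card (avoid_one C) + 1"] less card split
    unfolding B_def by auto
  have fin_shadow: "finite (shadow CB)"
    using finite_shadow[of CB e] CB(1) by (simp add: compressed_in_0_iff)
  have "D \<subseteq> CB"
    using compressed_subset_of_card_le[OF D(1) CB(1)] D(2) CB(2) less card split
    unfolding B_def by simp
  then have "card (link_one C) \<le> card (shadow CB)"
    using link_one_subset_shadow[OF C D] fin_shadow shadow_mono[of D CB]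
    by (meson card_mono order_trans)
  also have "\<dots> \<le> card (shadow B)"
    using shadow_min[OF B(1,2) CB(1,2)] \<open>card B < card H\<close> by simp
  also have "\<dots> \<le> card (link_one H)"
    using shadow_avoid_one_subset_link_one[OF H(1) e] finite_link_one[OF H(2)]
    unfolding B_def by (rule card_mono[rotated])
  finally show False using less by simp
qed

theorem card_shadow_compressed_le:
  assumes "shifted e B" "finite B" "compressed_in 0 e C" "card C = card B"
  shows "card (shadow C) \<le> card (shadow B)"
  using assms
proof (induction e arbitrary: B C)
  case 0
  then have "C \<subseteq> {{}}" by (simp add: compressed_in_0_iff subsets_N_0)
  then have "shadow C = {}" unfolding shadow_def by blast
  then show ?case by simp
next
  case (Suc e)
  from Suc.prems show ?case
  proof (induction "card B" arbitrary: B C rule: less_induct)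
    case less
    have link: "card (link_one C) \<le> card (link_one B)"
    proof (rule card_link_one_le_of_shadow[OF _ less.prems])
      fix B' C' assume "shifted (Suc e) B'" "finite B'" "compressed_in 0 (Suc e) C'"
        "card C' = card B'" "card B' < card B"
      then show "card (shadow C') \<le> card (shadow B')" using less.hyps by simp
    qed simp
    have "card (shadow (link_one C)) \<le> card (shadow (link_one B))"
      by (rule card_operator_link_one_le[OF shadow_mono finite_shadow Suc.IH less.prems(1-3) link])
    moreover have "card (shadow C) = card (link_one C) + card (shadow (link_one C))"
      using compressed_imp_shifted less.prems(3) card_shadow_shifted
      by (metis compressed_in_def)
    moreover have "card (shadow B) = card (link_one B) + card (shadow (link_one B))"
      using card_shadow_shifted less.prems(1,2) .
    ultimately show ?case using link by linarith
  qed
qed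

corollary card_link_one_compressed_le:
  assumes "shifted e H" "finite H" "compressed_in 0 e C" "card C = card H" "1 \<le> e"
  shows "card (link_one C) \<le> card (link_one H)"
  using card_link_one_le_of_shadow[OF card_shadow_compressed_le assms] .

theorem card_IncF_compressed_le:
  assumes "shifted e H" "finite H" "compressed_in 0 e C" "card C = card H"
  shows "card (IncF C) \<le> card (IncF H)"
  using assms
proof (induction e arbitrary: H C)
  case 0
  then have "H \<subseteq> {{}}" "C \<subseteq> {{}}"
    by (simp_all add: shifted_def compressed_in_0_iff subsets_N_0)
  then have "H = C" using 0(4) by (auto simp: subset_singleton_iff)
  then show ?case by simp
next
  case (Suc e)
  have link: "card (link_one C) \<le> card (link_one H)"
    using card_link_one_compressed_le[OF Suc.prems] by simp
  have "card (IncF (link_one C)) \<le> card (IncF (link_one H))"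
    by (rule card_operator_link_one_le[OF IncF_mono finite_IncF Suc.IH Suc.prems(1-3) link])
  moreover have "card (IncF C) = card C + card (IncF (link_one C))"
    using compressed_imp_shifted Suc.prems(3) card_IncF_shifted by (metis compressed_in_def)
  moreover have "card (IncF H) = card H + card (IncF (link_one H))"
    using card_IncF_shifted Suc.prems(1,2) .
  ultimately show ?case using Suc.prems(4) by linarith
qed

theorem mainTheorem10:
  fixes d :: nat and G H :: "nat set set"
  assumes "d \<ge> 2"
    and "G \<subseteq> subsets_N d" and "H \<subseteq> subsets_N d"
    and "finite G" and "finite H"
    and "card G = card H"
    and "compressed_in 0 d G"
    and "left_compressed d H" and "right_compressed d H"
  shows "card (IncF G) \<le> card (IncF H)"
proof -
  have "shifted d H"
    using left_right_compressed_imp_shifted assms(1,8,9,3) .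
  then show ?thesis
    by (rule card_IncF_compressed_le[OF _ assms(5,7,6)])
qed

end
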